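(* Let $n\ge 2$ be an integer and $A\subseteq L_n$. The subspace $(L_n,\tau(A)|_{L_n})$ of $(X_n,\tau(A))$ is perfect if and only if $A$ is a $G_\delta$-set in $(L_n,\tau_E|_{L_n})$.
   Context: For $\overline{x},\overline{a}\in\mathbb R^n$ let $|\overline{x}-\overline{a}|$ be the Euclidean distance and $B(\overline{a},\epsilon)=\{\overline{x}\in\mathbb R^n:|\overline{x}-\overline{a}|<\epsilon\}$. Let $P_n=\{\overline{x}\in\mathbb R^n: x_n>0\}$, $L_n=\{\overline{x}\in\mathbb R^n: x_n=0\}$, $X_n=P_n\cup L_n$, and let $\tau_E$ denote the Euclidean topology on $X_n$. For $\overline{a}\in L_n$ and $\epsilon>0$ put $\overline{a(\epsilon)}=(a_1,\dots,a_{n-1},\epsilon)$ and $\tilde B(\overline{a},\epsilon)=\{\overline{a}\}\cup B(\overline{a(\epsilon)},\epsilon)$. For $A\subseteq L_n$, the topology $\tau(A)$ on $X_n$ is generated by the local bases: at $\overline{a}\in P_n$, the sets $B(\overline{a},\epsilon)$ with $0<\epsilon<a_n$; at $\overline{a}\in A$, the sets $B(\overline{a},\epsilon)\cap X_n$ with $\epsilon>0$; at $\overline{a}\in L_n\setminus A$, the sets $\tilde B(\overline{a},\epsilon)$ with $\epsilon>0$. (Equivalently, $\tau(A)|_{L_n}$ is the topology on $L_n$ whose open sets are the sets $U\cup D$ with $U$ Euclidean-open in $L_n$ and $D\subseteq L_n\setminus A$.) A space is perfect if every closed set is a $G_\delta$-set. *)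

theory Defs
  imports "HOL-Analysis.Analysis"
begin

text \<open>Points of R^n are vectors of type real^'n; the distinguished coordinate k plays
  the role of the n-th (last) coordinate x_n.\<close>

definition Pn :: "'n::finite \<Rightarrow> (real^'n) set" where
  "Pn k = {x. x $ k > 0}"

definition Ln :: "'n::finite \<Rightarrow> (real^'n) set" where
  "Ln k = {x. x $ k = 0}"

definition Xn :: "'n::finite \<Rightarrow> (real^'n) set" where
  "Xn k = Pn k \<union> Ln k"

definition lift_pt :: "'n::finite \<Rightarrow> real^'n \<Rightarrow> real \<Rightarrow> real^'n" where
  "lift_pt k a e = (\<chi> i. if i = k then e else a $ i)"

definition tildeB :: "'n::finite \<Rightarrow> real^'n \<Rightarrow> real \<Rightarrow> (real^'n) set" where
  "tildeB k a e = insert a (ball (lift_pt k a e) e)"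

definition tauA :: "'n::finite \<Rightarrow> (real^'n) set \<Rightarrow> (real^'n) topology" where
  "tauA k A = topology (\<lambda>U. U \<subseteq> Xn k \<and>
     (\<forall>a\<in>U.
        (a \<in> Pn k \<longrightarrow> (\<exists>e. 0 < e \<and> e < a $ k \<and> ball a e \<subseteq> U)) \<and>
        (a \<in> A \<longrightarrow> (\<exists>e>0. ball a e \<inter> Xn k \<subseteq> U)) \<and>
        (a \<in> Ln k - A \<longrightarrow> (\<exists>e>0. tildeB k a e \<subseteq> U))))"

definition perfect_top :: "'a topology \<Rightarrow> bool" where
  "perfect_top T \<longleftrightarrow> (\<forall>C. closedin T C \<longrightarrow> gdelta_in T C)"

end

theory Submission
  imports Defs
begin

text \<open>On \<open>L\<^sub>n\<close> the topology \<open>\<tau>(A)\<close> is the Michael-line refinement of the Euclidean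
  topology: points of \<open>A\<close> keep their Euclidean neighbourhoods, while every other point becomes
  isolated, because \<open>B(a(\<epsilon>), \<epsilon>)\<close> lies in the open upper half space. For such a refinement
  \<open>X\<^sub>A\<close> of a perfect space \<open>X\<close>, the set \<open>A\<close> is closed in \<open>X\<^sub>A\<close>, and a \<open>G\<^sub>\<delta>\<close>-set of
  \<open>X\<^sub>A\<close> contained in \<open>A\<close> is already \<open>G\<^sub>\<delta>\<close> in \<open>X\<close>, since open sets of \<open>X\<^sub>A\<close> are
  \<open>X\<close>-neighbourhoods of their points in \<open>A\<close>. Conversely, a closed set \<open>C\<close> of \<open>X\<^sub>A\<close> is the union
  of \<open>cl\<^sub>X C \<inter> A\<close>, which is \<open>G\<^sub>\<delta>\<close> in \<open>X\<close> when \<open>A\<close> is, and of the \<open>X\<^sub>A\<close>-open set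
  \<open>C - A\<close>.\<close>

lemma ex_pos_conj_antimono:
  fixes P Q :: "real \<Rightarrow> bool"
  assumes "\<exists>e>0. P e" "\<exists>e>0. Q e"
    and "\<And>d e. d \<le> e \<Longrightarrow> P e \<Longrightarrow> P d" "\<And>d e. d \<le> e \<Longrightarrow> Q e \<Longrightarrow> Q d"
  shows "\<exists>e>0. P e \<and> Q e"
  using assms by (metis min.cobounded1 min.cobounded2 min_less_iff_conj)

lemma istopology_Pow: "istopology (\<lambda>U. U \<subseteq> X)"
  by (auto simp: istopology_def)

lemma istopology_conj:
  "istopology P \<Longrightarrow> istopology Q \<Longrightarrow> istopology (\<lambda>U. P U \<and> Q U)"
  by (simp add: istopology_def)

lemma istopology_pointwise:
  assumes "\<And>a U V. Q a U \<Longrightarrow> U \<subseteq> V \<Longrightarrow> Q a V"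
    and "\<And>a U V. a \<in> S \<Longrightarrow> Q a U \<Longrightarrow> Q a V \<Longrightarrow> Q a (U \<inter> V)"
  shows "istopology (\<lambda>U. \<forall>a\<in>U. a \<in> S \<longrightarrow> Q a U)"
  unfolding istopology_def
proof (intro conjI allI impI)
  fix U V assume "\<forall>a\<in>U. a \<in> S \<longrightarrow> Q a U" "\<forall>a\<in>V. a \<in> S \<longrightarrow> Q a V"
  then show "\<forall>a\<in>U \<inter> V. a \<in> S \<longrightarrow> Q a (U \<inter> V)"
    using assms(2) by blast
next
  fix \<K> assume "\<forall>U\<in>\<K>. \<forall>a\<in>U. a \<in> S \<longrightarrow> Q a U"
  then show "\<forall>a\<in>\<Union>\<K>. a \<in> S \<longrightarrow> Q a (\<Union>\<K>)"
    using assms(1) by (meson Union_iff Union_upper)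
qed

lemma in_interior_of_top_of_set:
  "a \<in> top_of_set S interior_of W \<longleftrightarrow> a \<in> S \<and> (\<exists>e>0. ball a e \<inter> S \<subseteq> W)"
proof
  assume a: "a \<in> top_of_set S interior_of W"
  then obtain e where "e > 0" "ball a e \<inter> S \<subseteq> top_of_set S interior_of W"
    using openin_interior_of[of "top_of_set S" W] by (meson openin_contains_ball)
  then show "a \<in> S \<and> (\<exists>e>0. ball a e \<inter> S \<subseteq> W)"
    using a interior_of_subset[of "top_of_set S" W] interior_of_subset_topspace[of "top_of_set S" W]
    by auto
next
  assume "a \<in> S \<and> (\<exists>e>0. ball a e \<inter> S \<subseteq> W)"
  then obtain e where "a \<in> S" "e > 0" "ball a e \<inter> S \<subseteq> W"
    by blast
  moreover have "openin (top_of_set S) (ball a e \<inter> S)"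
    using openin_open_Int[of "ball a e" S] by (simp add: Int_commute)
  ultimately show "a \<in> top_of_set S interior_of W"
    by (meson IntI centre_in_ball in_mono interior_of_maximal)
qed

lemma metrizable_imp_perfect_top: "metrizable_space X \<Longrightarrow> perfect_top X"
  by (simp add: perfect_top_def closed_imp_gdelta_in)

definition isolated_outside_topology :: "'a topology \<Rightarrow> 'a set \<Rightarrow> 'a topology" where
  "isolated_outside_topology E A =
     topology (\<lambda>W. W \<subseteq> topspace E \<and> W \<inter> A \<subseteq> E interior_of W)"

lemma istopology_isolated_outside:
  "istopology (\<lambda>W. W \<subseteq> topspace E \<and> W \<inter> A \<subseteq> E interior_of W)"
proof -
  have "\<Union>\<K> \<inter> A \<subseteq> E interior_of \<Union>\<K>" if "\<forall>W\<in>\<K>. W \<inter> A \<subseteq> E interior_of W" for \<K>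
    using that interior_of_mono[of _ "\<Union>\<K>" E] by blast
  then show ?thesis
    unfolding istopology_def by (auto simp: interior_of_Int)
qed

lemma openin_isolated_outside_topology:
  "openin (isolated_outside_topology E A) W \<longleftrightarrow> W \<subseteq> topspace E \<and> W \<inter> A \<subseteq> E interior_of W"
  by (simp add: isolated_outside_topology_def istopology_isolated_outside)

lemma topspace_isolated_outside_topology [simp]:
  "topspace (isolated_outside_topology E A) = topspace E"
proof -
  have "openin (isolated_outside_topology E A) (topspace E)"
    by (simp add: openin_isolated_outside_topology)
  then show ?thesis
    by (auto simp: topspace_def openin_isolated_outside_topology)
qed

lemma openin_isolated_outside_topologyI:
  "openin E W \<Longrightarrow> openin (isolated_outside_topology E A) W"
  by (simp add: openin_isolated_outside_topology openin_subset interior_of_openin)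

lemma openin_isolated_outside_topology_disjoint:
  "W \<subseteq> topspace E \<Longrightarrow> W \<inter> A = {} \<Longrightarrow> openin (isolated_outside_topology E A) W"
  by (simp add: openin_isolated_outside_topology)

lemma closedin_isolated_outside_topology:
  "closedin (isolated_outside_topology E A) C \<longleftrightarrow> C \<subseteq> topspace E \<and> A \<inter> E closure_of C \<subseteq> C"
proof -
  have "(topspace E - C) \<inter> A \<subseteq> topspace E - E closure_of C \<longleftrightarrow> A \<inter> E closure_of C \<subseteq> C"
    using closure_of_subset_topspace[of E C] by blast
  then show ?thesis
    by (simp add: closedin_def openin_isolated_outside_topology interior_of_complement)
qed

lemma gdelta_in_isolated_outside_topologyI:
  assumes "gdelta_in E S"
  shows "gdelta_in (isolated_outside_topology E A) S"
proof -
  have "(countable intersection_of openin E) S" and "S \<subseteq> topspace E"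
    using assms by (simp_all add: gdelta_in_alt)
  then show ?thesis
    by (simp add: gdelta_in_alt intersection_of_mono openin_isolated_outside_topologyI)
qed

lemma gdelta_in_isolated_outside_topologyD:
  assumes "gdelta_in (isolated_outside_topology E A) S" and "S \<subseteq> A"
  shows "gdelta_in E S"
proof -
  obtain \<U> where \<U>: "countable \<U>" "\<And>U. U \<in> \<U> \<Longrightarrow> openin (isolated_outside_topology E A) U"
    and S: "\<Inter>\<U> = S"
    using assms(1) by (auto simp: gdelta_in_alt intersection_of_def)
  have "S \<subseteq> E interior_of U" if "U \<in> \<U>" for U
  proof -
    have "S \<subseteq> U \<inter> A"
      using S that assms(2) by blast
    also have "\<dots> \<subseteq> E interior_of U"
      using \<U>(2)[OF that] by (simp add: openin_isolated_outside_topology)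
    finally show ?thesis .
  qed
  then have "(\<Inter>U\<in>\<U>. E interior_of U) = S"
    using S interior_of_subset[of E] by blast
  moreover have "(countable intersection_of openin E) (\<Inter>U\<in>\<U>. E interior_of U)"
    using \<U>(1) by (intro countable_intersection_of_INT countable_intersection_of_inc) auto
  ultimately show ?thesis
    using assms(1) by (simp add: gdelta_in_alt)
qed

theorem perfect_top_isolated_outside_topology_iff:
  assumes "perfect_top E" and "A \<subseteq> topspace E"
  shows "perfect_top (isolated_outside_topology E A) \<longleftrightarrow> gdelta_in E A"
proof
  assume "perfect_top (isolated_outside_topology E A)"
  moreover have "closedin (isolated_outside_topology E A) A"
    using assms(2) by (simp add: closedin_isolated_outside_topology)
  ultimately show "gdelta_in E A"
    by (auto simp: perfect_top_def intro: gdelta_in_isolated_outside_topologyD)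
next
  assume A: "gdelta_in E A"
  show "perfect_top (isolated_outside_topology E A)"
    unfolding perfect_top_def
  proof (intro allI impI)
    fix C assume "closedin (isolated_outside_topology E A) C"
    then have C: "C \<subseteq> topspace E" "A \<inter> E closure_of C \<subseteq> C"
      by (simp_all add: closedin_isolated_outside_topology)
    have "gdelta_in E (E closure_of C \<inter> A)"
      using assms(1) A by (simp add: perfect_top_def gdelta_in_Int)
    moreover have "openin (isolated_outside_topology E A) (C - A)"
      using C by (intro openin_isolated_outside_topology_disjoint) auto
    moreover have "C = (E closure_of C \<inter> A) \<union> (C - A)"
      using C closure_of_subset[of C E] by blast
    ultimately show "gdelta_in (isolated_outside_topology E A) C"
      by (metis gdelta_in_Un gdelta_in_isolated_outside_topologyI open_imp_gdelta_in)
  qed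
qed

lemma dist_lift_pt: "dist (lift_pt k a d) (lift_pt k a e) = \<bar>d - e\<bar>"
proof -
  have "lift_pt k a d - lift_pt k a e = (d - e) *\<^sub>R axis k 1"
    by (simp add: vec_eq_iff lift_pt_def axis_def)
  then show ?thesis
    by (simp add: dist_norm)
qed

lemma tildeB_mono:
  assumes "d \<le> e"
  shows "tildeB k a d \<subseteq> tildeB k a e"
proof -
  have "ball (lift_pt k a d) d \<subseteq> ball (lift_pt k a e) e"
    using assms by (simp add: ball_subset_ball_iff dist_lift_pt)
  then show ?thesis
    by (auto simp: tildeB_def)
qed

lemma ball_lift_pt_subset_Pn: "ball (lift_pt k a e) e \<subseteq> Pn k"
proof
  fix x assume "x \<in> ball (lift_pt k a e) e"
  then have "\<bar>(lift_pt k a e - x) $ k\<bar> < e"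
    using component_le_norm_cart[of "lift_pt k a e - x" k] by (simp add: dist_norm)
  then show "x \<in> Pn k"
    by (simp add: Pn_def lift_pt_def)
qed

lemma ball_subset_Pn: "ball x (x $ k) \<subseteq> Pn k"
proof
  fix y assume "y \<in> ball x (x $ k)"
  then have "\<bar>(x - y) $ k\<bar> < x $ k"
    using component_le_norm_cart[of "x - y" k] by (simp add: dist_norm)
  then show "y \<in> Pn k"
    by (simp add: Pn_def)
qed

lemma Pn_Int_Ln: "Pn k \<inter> Ln k = {}"
  by (auto simp: Pn_def Ln_def)

lemma openin_tauA:
  "openin (tauA k A) U \<longleftrightarrow> U \<subseteq> Xn k \<and>
     (\<forall>a\<in>U.
        (a \<in> Pn k \<longrightarrow> (\<exists>e. 0 < e \<and> e < a $ k \<and> ball a e \<subseteq> U)) \<and>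
        (a \<in> A \<longrightarrow> (\<exists>e>0. ball a e \<inter> Xn k \<subseteq> U)) \<and>
        (a \<in> Ln k - A \<longrightarrow> (\<exists>e>0. tildeB k a e \<subseteq> U)))"
proof -
  have Pn: "\<exists>e>0. e < c \<and> ball a e \<subseteq> U \<inter> V"
    if "\<exists>e>0. e < c \<and> ball a e \<subseteq> U" "\<exists>e>0. e < c \<and> ball a e \<subseteq> V"
    for a :: "real^'n" and c U V
    using ex_pos_conj_antimono[OF that] by (auto dest: subset_ball[THEN order_trans])
  have A: "\<exists>e>0. ball a e \<inter> X \<subseteq> U \<inter> V"
    if "\<exists>e>0. ball a e \<inter> X \<subseteq> U" "\<exists>e>0. ball a e \<inter> X \<subseteq> V"
    for a :: "real^'n" and X U V
  proof -
    have "\<exists>e>0. ball a e \<inter> X \<subseteq> U \<and> ball a e \<inter> X \<subseteq> V"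
      by (rule ex_pos_conj_antimono[OF that]) (use subset_ball in blast)+
    then show ?thesis
      by blast
  qed
  have tildeB: "\<exists>e>0. tildeB k a e \<subseteq> U \<inter> V"
    if "\<exists>e>0. tildeB k a e \<subseteq> U" "\<exists>e>0. tildeB k a e \<subseteq> V" for a U V
  proof -
    have "\<exists>e>0. tildeB k a e \<subseteq> U \<and> tildeB k a e \<subseteq> V"
      by (rule ex_pos_conj_antimono[OF that]) (use tildeB_mono in blast)+
    then show ?thesis
      by blast
  qed
  show ?thesis
    unfolding tauA_def ball_conj_distrib
    by (subst topology_inverse', intro istopology_conj istopology_Pow istopology_pointwise Pn A tildeB)
      blast+
qed

lemma subtopology_tauA_Ln:
  assumes "A \<subseteq> Ln k"
  shows "subtopology (tauA k A) (Ln k) = isolated_outside_topology (top_of_set (Ln k)) A"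
  unfolding topology_eq
proof (intro allI iffI)
  fix W assume "openin (subtopology (tauA k A) (Ln k)) W"
  then obtain V where V: "openin (tauA k A) V" and W: "W = V \<inter> Ln k"
    by (auto simp: openin_subtopology)
  have "a \<in> top_of_set (Ln k) interior_of W" if a: "a \<in> W \<inter> A" for a
  proof -
    obtain e where "e > 0" "ball a e \<inter> Xn k \<subseteq> V"
      using V a W unfolding openin_tauA by blast
    then show ?thesis
      using a W by (auto simp: in_interior_of_top_of_set Xn_def)
  qed
  then show "openin (isolated_outside_topology (top_of_set (Ln k)) A) W"
    using W by (auto simp: openin_isolated_outside_topology)
next
  fix W assume "openin (isolated_outside_topology (top_of_set (Ln k)) A) W"
  then have W: "W \<subseteq> Ln k" "\<And>a. a \<in> W \<inter> A \<Longrightarrow> \<exists>e>0. ball a e \<inter> Ln k \<subseteq> W"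
    by (auto simp: openin_isolated_outside_topology in_interior_of_top_of_set)
  have "openin (tauA k A) (W \<union> Pn k)"
    unfolding openin_tauA
  proof (intro conjI ballI impI)
    show "W \<union> Pn k \<subseteq> Xn k"
      using W by (auto simp: Xn_def)
  next
    fix a assume "a \<in> Pn k"
    then show "\<exists>e>0. e < a $ k \<and> ball a e \<subseteq> W \<union> Pn k"
      using ball_subset_Pn[of a k] subset_ball[of "a $ k / 2" "a $ k" a]
      by (intro exI[of _ "a $ k / 2"]) (auto simp: Pn_def)
  next
    fix a assume "a \<in> W \<union> Pn k" "a \<in> A"
    then obtain e where "e > 0" "ball a e \<inter> Ln k \<subseteq> W"
      using W(2) assms Pn_Int_Ln by blast
    then show "\<exists>e>0. ball a e \<inter> Xn k \<subseteq> W \<union> Pn k"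
      by (auto simp: Xn_def)
  next
    fix a assume "a \<in> W \<union> Pn k" "a \<in> Ln k - A"
    then have "tildeB k a 1 \<subseteq> W \<union> Pn k"
      using ball_lift_pt_subset_Pn[of k a 1] Pn_Int_Ln by (auto simp: tildeB_def)
    then show "\<exists>e>0. tildeB k a e \<subseteq> W \<union> Pn k"
      using zero_less_one by blast
  qed
  moreover have "W = (W \<union> Pn k) \<inter> Ln k"
    using W Pn_Int_Ln by blast
  ultimately show "openin (subtopology (tauA k A) (Ln k)) W"
    by (auto simp: openin_subtopology)
qed

theorem mainTheorem10:
  fixes A :: "(real^'n) set" and k :: 'n
  assumes "CARD('n) \<ge> 2" and "A \<subseteq> Ln k"
  shows "perfect_top (subtopology (tauA k A) (Ln k))
         \<longleftrightarrow> gdelta_in (subtopology euclidean (Ln k)) A"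
proof -
  have "perfect_top (top_of_set (Ln k))"
    by (simp add: metrizable_imp_perfect_top metrizable_space_subtopology metrizable_space_euclidean)
  then show ?thesis
    using assms(2) by (simp add: subtopology_tauA_Ln perfect_top_isolated_outside_topology_iff)
qed

end
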